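(* Let $\{\mu_t\}_{t\ge0}$ be a weakly continuous $\rhd$-convolution semigroup with $\mu_0=\delta_0$, with associated pair $(\gamma,\tau)$. The following are equivalent: (1) there exists $t_0>0$ such that $\operatorname{supp}\mu_{t_0}$ is bounded below; (2) $\operatorname{supp}\mu_t$ is bounded below for all $0\le t<\infty$; (3) $\operatorname{supp}\tau$ is bounded below.
   Context: For a probability measure $\mu$ on $\mathbb{R}$, $G_\mu(z)=\int\frac{1}{z-x}d\mu(x)$ on $\mathbb{C}^+$ and $H_\mu=1/G_\mu$; the monotone convolution $\mu\rhd\nu$ is the unique probability measure with $H_{\mu\rhd\nu}=H_\mu\circ H_\nu$. A weakly continuous $\rhd$-convolution semigroup is a family $\{\mu_t\}_{t\ge0}$ of probability measures, weakly continuous in $t$, with $\mu_s\rhd\mu_t=\mu_{s+t}$. For such a semigroup with $\mu_0=\delta_0$ there is a unique pair $(\gamma,\tau)$, $\gamma\in\mathbb{R}$, $\tau$ positive finite, such that with $A(z)=-\gamma+\int\frac{1+xz}{x-z}d\tau(x)$ the maps $H_t:=H_{\mu_t}$ solve $\frac{d}{dt}H_t(z)=A(H_t(z))$, $H_0(z)=z$, on $\mathbb{C}\setminus\mathbb{R}$ (the associated pair). *)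

theory Defs
  imports "HOL-Probability.Probability"
begin

definition upper_half :: "complex set" where
  "upper_half = {z. Im z > 0}"

definition cauchy_G :: "real measure \<Rightarrow> complex \<Rightarrow> complex" where
  "cauchy_G \<mu> z = (\<integral>x. 1 / (z - complex_of_real x) \<partial>\<mu>)"

definition recip_H :: "real measure \<Rightarrow> complex \<Rightarrow> complex" where
  "recip_H \<mu> z = 1 / cauchy_G \<mu> z"

text \<open>Monotone convolution relation: nu3 = nu1 |> nu2 iff H_nu3 = H_nu1 o H_nu2 on the upper half plane
  (nu3 being a Borel probability measure; such a measure is unique).\<close>
definition is_monotone_conv :: "real measure \<Rightarrow> real measure \<Rightarrow> real measure \<Rightarrow> bool" where
  "is_monotone_conv \<mu> \<nu> \<rho> \<longleftrightarrow>
     prob_space \<rho> \<and> sets \<rho> = sets borel \<and>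
     (\<forall>z\<in>upper_half. recip_H \<rho> z = recip_H \<mu> (recip_H \<nu> z))"

definition weakly_continuous_family :: "(real \<Rightarrow> real measure) \<Rightarrow> bool" where
  "weakly_continuous_family \<mu> \<longleftrightarrow>
     (\<forall>f::real \<Rightarrow> real. continuous_on UNIV f \<longrightarrow> bounded (range f) \<longrightarrow>
        continuous_on {0..} (\<lambda>t. \<integral>x. f x \<partial>\<mu> t))"

definition monotone_conv_semigroup :: "(real \<Rightarrow> real measure) \<Rightarrow> bool" where
  "monotone_conv_semigroup \<mu> \<longleftrightarrow>
     (\<forall>t\<ge>0. prob_space (\<mu> t) \<and> sets (\<mu> t) = sets borel) \<and>
     weakly_continuous_family \<mu> \<and>
     \<mu> 0 = return borel 0 \<and>
     (\<forall>s\<ge>0. \<forall>t\<ge>0. is_monotone_conv (\<mu> s) (\<mu> t) (\<mu> (s + t)))"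

definition gen_A :: "real \<Rightarrow> real measure \<Rightarrow> complex \<Rightarrow> complex" where
  "gen_A \<gamma> \<tau> z = - complex_of_real \<gamma> +
     (\<integral>x. (1 + complex_of_real x * z) / (complex_of_real x - z) \<partial>\<tau>)"

definition associated_pair :: "(real \<Rightarrow> real measure) \<Rightarrow> real \<Rightarrow> real measure \<Rightarrow> bool" where
  "associated_pair \<mu> \<gamma> \<tau> \<longleftrightarrow>
     finite_measure \<tau> \<and> sets \<tau> = sets borel \<and>
     (\<forall>z. Im z \<noteq> 0 \<longrightarrow>
        recip_H (\<mu> 0) z = z \<and>
        (\<forall>t\<ge>0. ((\<lambda>s. recip_H (\<mu> s) z) has_vector_derivative gen_A \<gamma> \<tau> (recip_H (\<mu> t) z))
                  (at t within {0..})))"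

definition msupp :: "real measure \<Rightarrow> real set" where
  "msupp M = {x. \<forall>e>0. emeasure M (ball x e) > 0}"

end

theory Submission
  imports Defs
begin

(*
  Write H_t for the reciprocal Cauchy transform of mu_t and G_t = 1 / H_t.  A finite Borel
  measure on the line has support bounded below as soon as, for all x below some b, it gives
  mass O(e^2) to the balls B(x, e): its distribution function then has zero derivative below b.
  Such mass bounds come from mu(B(x, e)) <= 2 e (- Im G_mu(x + i e)) and
  tau(B(x, e)) <= 2 e Im A(x + i e).

  (3) => (2): if tau lives on (a, oo), then on a left half-plane Re A is bounded above and
  Im A(w) <= K Im w.  Hence for x far to the left the trajectory t |-> H_t(x + i e) stays in that
  half-plane up to time t, where Im H_t(x + i e) <= e exp (K t), and -Im G_t <= Im H_t there.

  (1) => (3): the semigroup law H_T = H_(T-t) o H_t transfers the lower bound on the support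
  of mu_T to every mu_t with t <= T, uniformly.  Since Im A(z) is the derivative of Im H_t(z)
  at t = 0 and Im H_t(z) - Im z = Im z Var_t(z) / |G_t(z)|^2, where Var_t(z) is the variance of
  y |-> 1 / (z - y) under mu_t, comparing the variances at z = x + i e and at i gives
  Im A(x + i e) = O(e).
*)

section \<open>Supports bounded below\<close>

lemma has_real_derivative_zero_of_quadratic_bound:
  fixes F :: "real \<Rightarrow> real"
  assumes "\<forall>\<^sub>F h in at 0. \<bar>F (x + h) - F x\<bar> \<le> C * h\<^sup>2"
  shows "(F has_real_derivative 0) (at x)"
proof -
  have "\<forall>\<^sub>F h in at 0. norm ((F (x + h) - F x) / h) \<le> \<bar>C\<bar> * \<bar>h\<bar>"
    using assms
  proof eventually_elim
    case (elim h)
    have "C * h\<^sup>2 \<le> \<bar>C\<bar> * h\<^sup>2"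
      by (rule mult_right_mono) auto
    with elim have "\<bar>F (x + h) - F x\<bar> \<le> (\<bar>C\<bar> * \<bar>h\<bar>) * \<bar>h\<bar>"
      by (simp add: power2_eq_square mult.assoc)
    then show ?case
      by (cases "h = 0") (simp_all add: abs_divide divide_le_eq)
  qed
  moreover have "((\<lambda>h. \<bar>C\<bar> * \<bar>h\<bar>) \<longlongrightarrow> 0) (at 0)"
    by (auto intro!: tendsto_eq_intros)
  ultimately show ?thesis
    unfolding DERIV_def by (rule Lim_null_comparison)
qed

context finite_borel_measure
begin

declare M_is_borel [measurable_cong]

lemma abs_cdf_diff_le_measure_ball:
  assumes "\<bar>y - x\<bar> < r"
  shows "\<bar>cdf M y - cdf M x\<bar> \<le> measure M (ball x r)"
proof (cases x y rule: linorder_cases)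
  case less
  then have "\<bar>cdf M y - cdf M x\<bar> = measure M {x<..y}"
    using cdf_diff_eq cdf_nondecreasing by simp
  also have "\<dots> \<le> measure M (ball x r)"
    using less assms by (intro finite_measure_mono) (auto simp: dist_real_def)
  finally show ?thesis .
next
  case greater
  then have "\<bar>cdf M y - cdf M x\<bar> = measure M {y<..x}"
    using cdf_diff_eq cdf_nondecreasing by simp
  also have "\<dots> \<le> measure M (ball x r)"
    using greater assms by (intro finite_measure_mono) (auto simp: dist_real_def)
  finally show ?thesis .
qed simp

lemma cdf_eq_0_of_has_derivative_0:
  assumes deriv: "\<And>x. x < b \<Longrightarrow> (cdf M has_real_derivative 0) (at x)" and "x < b"
  shows "cdf M x = 0"
proof -
  have "cdf M y = cdf M x" if "y < x" for y
  proof -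
    have "continuous_on {y..x} (cdf M)"
      using \<open>x < b\<close> by (auto intro!: continuous_at_imp_continuous_on DERIV_isCont[OF deriv])
    then show ?thesis
      using \<open>y < x\<close> \<open>x < b\<close> deriv by (intro DERIV_isconst_end[symmetric]) auto
  qed
  then have "\<forall>\<^sub>F y in at_bot. cdf M y = cdf M x"
    unfolding eventually_at_bot_dense by blast
  then have "(cdf M \<longlongrightarrow> cdf M x) at_bot"
    by (rule tendsto_eventually)
  then show ?thesis
    using cdf_lim_at_bot by (rule tendsto_unique[rotated]) simp
qed

lemma cdf_has_derivative_0_outside_msupp:
  assumes "x \<notin> msupp M"
  shows "(cdf M has_real_derivative 0) (at x)"
proof -
  obtain r where r: "0 < r" "emeasure M (ball x r) = 0"
    using assms unfolding msupp_def by (auto simp: not_less)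
  have "\<forall>\<^sub>F h in at 0. \<bar>cdf M (x + h) - cdf M x\<bar> \<le> 0 * h\<^sup>2"
    using eventually_at_ball[OF \<open>0 < r\<close>, of 0 UNIV]
  proof eventually_elim
    case (elim h)
    then have "\<bar>cdf M (x + h) - cdf M x\<bar> \<le> measure M (ball x r)"
      by (intro abs_cdf_diff_le_measure_ball) (simp add: dist_real_def)
    with r show ?case
      by (simp add: measure_def)
  qed
  then show ?thesis
    by (rule has_real_derivative_zero_of_quadratic_bound)
qed

lemma AE_greater_of_cdf_eq_0:
  assumes "cdf M a = 0"
  shows "AE y in M. a < y"
proof (rule AE_I')
  show "{..a} \<in> null_sets M"
    using assms by (simp add: null_sets_def cdf_def emeasure_eq_measure M_is_borel)
qed auto

lemma bdd_below_msupp_iff_AE: "bdd_below (msupp M) \<longleftrightarrow> (\<exists>a. AE y in M. a < y)"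
proof
  assume "bdd_below (msupp M)"
  then obtain m where m: "\<And>x. x \<in> msupp M \<Longrightarrow> m \<le> x"
    unfolding bdd_below_def by blast
  have "(cdf M has_real_derivative 0) (at x)" if "x < m" for x
    using m[of x] that by (intro cdf_has_derivative_0_outside_msupp) linarith
  moreover have "m - 1 < m"
    by linarith
  ultimately have "cdf M (m - 1) = 0"
    by (rule cdf_eq_0_of_has_derivative_0)
  then have "AE y in M. m - 1 < y"
    by (rule AE_greater_of_cdf_eq_0)
  then show "\<exists>a. AE y in M. a < y" ..
next
  assume "\<exists>a. AE y in M. a < y"
  then obtain a where a: "AE y in M. a < y" by blast
  have null: "emeasure M {..a} = 0"
  proof -
    have "{y \<in> space M. \<not> a < y} = {..a}"
      by (auto simp: borel_UNIV)
    then show ?thesis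
      using a AE_iff_measurable[of "{..a}" M "\<lambda>y. a < y"] by (simp add: M_is_borel)
  qed
  have "a \<le> x" if "x \<in> msupp M" for x
  proof (rule ccontr)
    assume "\<not> a \<le> x"
    then have "0 < a - x" "ball x (a - x) \<subseteq> {..a}"
      by (auto simp: dist_real_def)
    then have "emeasure M (ball x (a - x)) = 0"
      using null emeasure_mono[of "ball x (a - x)" "{..a}" M] by (simp add: M_is_borel)
    moreover have "0 < emeasure M (ball x (a - x))"
      using that \<open>0 < a - x\<close> unfolding msupp_def by blast
    ultimately show False
      by simp
  qed
  then show "bdd_below (msupp M)"
    by (rule bdd_belowI)
qed

lemma AE_greater_of_measure_ball_le:
  assumes "\<And>x. x < b \<Longrightarrow> \<exists>C. \<forall>e. 0 < e \<longrightarrow> e < 1 \<longrightarrow> measure M (ball x e) \<le> C * e\<^sup>2"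
    and "a < b"
  shows "AE y in M. a < y"
proof -
  have "(cdf M has_real_derivative 0) (at x)" if "x < b" for x
  proof -
    obtain C where C: "\<And>e. 0 < e \<Longrightarrow> e < 1 \<Longrightarrow> measure M (ball x e) \<le> C * e\<^sup>2"
      using assms(1)[OF \<open>x < b\<close>] by blast
    have "\<forall>\<^sub>F h in at (0::real). 0 < \<bar>h\<bar> \<and> \<bar>h\<bar> < 1/2"
      unfolding eventually_at by (auto simp: dist_real_def intro!: exI[of _ "1/2"])
    then have "\<forall>\<^sub>F h in at 0. \<bar>cdf M (x + h) - cdf M x\<bar> \<le> (4 * C) * h\<^sup>2"
    proof eventually_elim
      case (elim h)
      then have "\<bar>cdf M (x + h) - cdf M x\<bar> \<le> C * (2 * \<bar>h\<bar>)\<^sup>2"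
        using abs_cdf_diff_le_measure_ball[of "x + h" x "2 * \<bar>h\<bar>"] C[of "2 * \<bar>h\<bar>"] by simp
      then show ?case
        by (simp add: power_mult_distrib)
    qed
    then show ?thesis
      by (rule has_real_derivative_zero_of_quadratic_bound)
  qed
  then have "cdf M a = 0"
    using \<open>a < b\<close> by (rule cdf_eq_0_of_has_derivative_0)
  then show ?thesis
    by (rule AE_greater_of_cdf_eq_0)
qed

lemma measure_ball_le_integral:
  assumes "integrable M u" "\<And>y. 0 \<le> u y" "\<And>y. y \<in> ball x e \<Longrightarrow> 1 / (2 * e) \<le> u y" "0 < e"
  shows "measure M (ball x e) \<le> 2 * e * (\<integral>y. u y \<partial>M)"
proof -
  have [measurable]: "u \<in> borel_measurable M"
    using assms(1) by blast
  have "measure M (ball x e) \<le> measure M {y \<in> space M. 1 / (2 * e) \<le> u y}"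
    using assms(3) by (intro finite_measure_mono) (auto simp: borel_UNIV)
  also have "\<dots> \<le> (\<integral>y. u y \<partial>M) / (1 / (2 * e))"
    \<comment> \<open>the set \<open>A\<close> in the library's Markov inequality is a dummy parameter\<close>
    using assms by (intro integral_Markov_inequality_measure[where A = "{}"]) auto
  finally show ?thesis
    by (simp add: mult.commute)
qed

end

lemma one_add_power2_pos [simp]: "0 < 1 + (y::real)\<^sup>2"
  by (simp add: add_pos_nonneg)

lemma one_add_power2_neq_zero [simp]: "1 + (y::real)\<^sup>2 \<noteq> 0"
  using one_add_power2_pos[of y] by linarith

lemma power2_add_one_pos [simp]: "0 < (y::real)\<^sup>2 + 1"
  by (simp add: add_nonneg_pos)

lemma power2_add_one_neq_zero [simp]: "(y::real)\<^sup>2 + 1 \<noteq> 0"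
  using power2_add_one_pos[of y] by linarith

lemma abs_divide_power2_add_one_le: "\<bar>t / (t\<^sup>2 + 1)\<bar> \<le> (1::real)"
proof -
  have "0 \<le> (\<bar>t\<bar> - 1)\<^sup>2"
    by simp
  then have "\<bar>t\<bar> \<le> t\<^sup>2 + 1"
    by (simp add: power2_diff)
  moreover have "0 < t\<^sup>2 + 1"
    by (simp add: add_nonneg_pos)
  ultimately show ?thesis
    by (simp add: abs_divide divide_le_eq_1)
qed

lemma poisson_kernel_ge:
  fixes x y e :: real
  assumes "y \<in> ball x e"
  shows "1 / (2 * e) \<le> e / ((y - x)\<^sup>2 + e\<^sup>2)"
proof -
  have "0 < e" "\<bar>y - x\<bar> < e"
    using assms by (auto simp: dist_real_def)
  have "\<bar>y - x\<bar>\<^sup>2 < e\<^sup>2"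
    using \<open>\<bar>y - x\<bar> < e\<close> by (intro power_strict_mono) auto
  then have "e / (2 * e\<^sup>2) \<le> e / ((y - x)\<^sup>2 + e\<^sup>2)"
    using \<open>0 < e\<close> by (intro divide_left_mono) (auto intro!: mult_pos_pos add_nonneg_pos)
  moreover have "e / (2 * e\<^sup>2) = 1 / (2 * e)"
    by (simp add: power2_eq_square)
  ultimately show ?thesis
    by simp
qed

lemma one_add_power2_le_mult_power2_diff:
  fixes a c y :: real
  assumes "c \<le> -1" "c \<le> a - 1" "a < y"
  shows "1 + y\<^sup>2 \<le> (2 + a\<^sup>2) * (y - c)\<^sup>2"
proof -
  have "1 \<le> (y - c)\<^sup>2"
    using assms by (intro one_le_power) auto
  show ?thesis
  proof (cases "0 \<le> y")
    case True
    then have "y\<^sup>2 \<le> (y - c)\<^sup>2"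
      using assms by (intro power_mono) auto
    moreover have "0 \<le> a\<^sup>2 * (y - c)\<^sup>2"
      by simp
    ultimately show ?thesis
      using \<open>1 \<le> (y - c)\<^sup>2\<close> unfolding distrib_right by linarith
  next
    case False
    then have "y\<^sup>2 \<le> a\<^sup>2"
      using assms by (simp add: abs_le_square_iff[symmetric])
    then have "1 + y\<^sup>2 \<le> (2 + a\<^sup>2) * 1"
      by simp
    also have "\<dots> \<le> (2 + a\<^sup>2) * (y - c)\<^sup>2"
      using \<open>1 \<le> (y - c)\<^sup>2\<close> by (intro mult_left_mono) auto
    finally show ?thesis .
  qed
qed

lemma neg_Im_one_div_le:
  assumes "1 \<le> cmod w" "0 \<le> Im w"
  shows "- Im (1 / w) \<le> Im w"
proof -
  have "- Im (1 / w) = Im w / (cmod w)\<^sup>2"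
    by (simp add: Im_divide cmod_power2)
  also have "\<dots> \<le> Im w"
    using assms by (simp add: divide_le_eq mult_le_cancel_left1 one_le_power)
  finally show ?thesis .
qed

lemma below_barrier_of_deriv_le:
  fixes g g' :: "real \<Rightarrow> real"
  assumes cont: "continuous_on {0..t} g"
    and deriv: "\<And>r. 0 < r \<Longrightarrow> r < t \<Longrightarrow> (g has_real_derivative g' r) (at r)"
    and slope: "\<And>r. 0 < r \<Longrightarrow> r < t \<Longrightarrow> g r < c \<Longrightarrow> g' r \<le> L"
    and start: "g 0 + L * t < c" and "0 \<le> L"
    and s: "0 \<le> s" "s \<le> t"
  shows "g s < c"
proof (rule ccontr)
  assume "\<not> g s < c"
  define T where "T = {0..s} \<inter> g -` {c..}"
  have "closed T"
    unfolding T_def using s by (intro continuous_closed_preimage continuous_on_subset[OF cont]) auto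
  moreover have "s \<in> T" "bdd_below T"
    using s \<open>\<not> g s < c\<close> by (auto simp: T_def intro: bdd_belowI[of _ 0])
  ultimately have "Inf T \<in> T"
    using closed_contains_Inf by blast
  define s1 where "s1 = Inf T"
  have s1: "0 \<le> s1" "s1 \<le> s" "c \<le> g s1"
    using \<open>Inf T \<in> T\<close> by (auto simp: T_def s1_def)
  have below: "g r < c" if "0 \<le> r" "r < s1" for r
    using that s1 cInf_lower[OF _ \<open>bdd_below T\<close>, of r] by (force simp: T_def s1_def)
  have "g s1 - L * s1 \<le> g 0 - L * 0"
  proof (rule DERIV_nonpos_imp_decreasing_open[of 0 s1 "\<lambda>r. g r - L * r"])
    show "continuous_on {0..s1} (\<lambda>r. g r - L * r)"
      using s1 s by (intro continuous_intros continuous_on_subset[OF cont]) auto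
    fix r assume "0 < r" "r < s1"
    then show "\<exists>d. ((\<lambda>r. g r - L * r) has_real_derivative d) (at r) \<and> d \<le> 0"
      using s1 s below[of r] slope[of r] by (auto intro!: exI derivative_eq_intros deriv)
  qed (use s1 in auto)
  then have "g s1 \<le> g 0 + L * t"
    using s1 s \<open>0 \<le> L\<close> mult_left_mono[of s1 t L] by simp
  with start s1 show False
    by simp
qed

lemma le_exp_of_deriv_le:
  fixes g g' :: "real \<Rightarrow> real"
  assumes "0 \<le> t" and cont: "continuous_on {0..t} g"
    and deriv: "\<And>r. 0 < r \<Longrightarrow> r < t \<Longrightarrow> (g has_real_derivative g' r) (at r)"
    and slope: "\<And>r. 0 < r \<Longrightarrow> r < t \<Longrightarrow> g' r \<le> K * g r"
  shows "g t \<le> g 0 * exp (K * t)"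
proof -
  have "g t * exp (- K * t) \<le> g 0 * exp (- K * 0)"
  proof (rule DERIV_nonpos_imp_decreasing_open[OF \<open>0 \<le> t\<close>])
    show "continuous_on {0..t} (\<lambda>r. g r * exp (- K * r))"
      by (intro continuous_intros cont)
    fix r assume r: "0 < r" "r < t"
    have "(g' r - K * g r) * exp (- K * r) \<le> 0"
      using slope[OF r] by (simp add: mult_nonpos_nonneg)
    then show "\<exists>d. ((\<lambda>r. g r * exp (- K * r)) has_real_derivative d) (at r) \<and> d \<le> 0"
      using r by (auto intro!: exI derivative_eq_intros deriv simp: algebra_simps)
  qed
  then show ?thesis
    by (simp add: exp_minus field_simps)
qed

section \<open>Variance of a complex random variable\<close>

lemma (in prob_space) integrable_cmod_diff_sq:
  fixes f :: "'a \<Rightarrow> complex"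
  assumes "integrable M f" "integrable M (\<lambda>y. (cmod (f y))\<^sup>2)"
  shows "integrable M (\<lambda>y. (cmod (a - f y))\<^sup>2)"
proof -
  have "integrable M (\<lambda>y. (cmod a)\<^sup>2 - 2 * Re (a * cnj (f y)) + (cmod (f y))\<^sup>2)"
    using assms by (intro Bochner_Integration.integrable_add Bochner_Integration.integrable_diff
        integrable_mult_right integrable_Re integrable_cnj) auto
  then show ?thesis
    by (simp add: cmod_power2 power2_diff algebra_simps)
qed

lemma (in prob_space) integral_cmod_diff_sq:
  fixes f :: "'a \<Rightarrow> complex"
  assumes "integrable M f" "integrable M (\<lambda>y. (cmod (f y))\<^sup>2)"
  shows "(\<integral>y. (cmod (a - f y))\<^sup>2 \<partial>M)
    = (cmod a)\<^sup>2 - 2 * Re (a * cnj (integral\<^sup>L M f)) + (\<integral>y. (cmod (f y))\<^sup>2 \<partial>M)"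
proof -
  have expand: "(cmod (a - f y))\<^sup>2 = (cmod a)\<^sup>2 - 2 * Re (a * cnj (f y)) + (cmod (f y))\<^sup>2" for y
    by (simp add: cmod_power2 power2_diff algebra_simps)
  have "(\<integral>y. Re (a * cnj (f y)) \<partial>M) = Re (a * cnj (integral\<^sup>L M f))"
    using assms(1) by (subst integral_Re) auto
  then show ?thesis
    unfolding expand using assms by (simp add: prob_space)
qed

lemma (in prob_space) integrable_integral_cmod_diff_sq:
  fixes f :: "'a \<Rightarrow> complex"
  assumes "integrable M f" "integrable M (\<lambda>y. (cmod (f y))\<^sup>2)"
  shows "integrable M (\<lambda>y. \<integral>y'. (cmod (f y - f y'))\<^sup>2 \<partial>M)"
  unfolding integral_cmod_diff_sq[OF assms] using assms
  by (intro Bochner_Integration.integrable_add Bochner_Integration.integrable_diff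
      integrable_mult_right integrable_Re integrable_mult_left) auto

lemma (in prob_space) double_integral_cmod_diff_sq:
  fixes f :: "'a \<Rightarrow> complex"
  assumes "integrable M f" "integrable M (\<lambda>y. (cmod (f y))\<^sup>2)"
  shows "(\<integral>y. (\<integral>y'. (cmod (f y - f y'))\<^sup>2 \<partial>M) \<partial>M)
    = 2 * ((\<integral>y. (cmod (f y))\<^sup>2 \<partial>M) - (cmod (integral\<^sup>L M f))\<^sup>2)"
proof -
  have "(\<integral>y. Re (f y * cnj (integral\<^sup>L M f)) \<partial>M) = Re (integral\<^sup>L M f * cnj (integral\<^sup>L M f))"
    using assms(1) by (subst integral_Re) auto
  also have "\<dots> = (cmod (integral\<^sup>L M f))\<^sup>2"
    by (simp add: complex_mult_cnj cmod_power2)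
  finally have "(\<integral>y. Re (f y * cnj (integral\<^sup>L M f)) \<partial>M) = (cmod (integral\<^sup>L M f))\<^sup>2" .
  then show ?thesis
    unfolding integral_cmod_diff_sq[OF assms] using assms by (simp add: prob_space)
qed

section \<open>The Cauchy transform\<close>

definition cauchy_kernel :: "complex \<Rightarrow> real \<Rightarrow> complex" where
  "cauchy_kernel z y = 1 / (z - of_real y)"

definition cauchy_norm_sq :: "real measure \<Rightarrow> complex \<Rightarrow> real" where
  "cauchy_norm_sq M z = (\<integral>y. (cmod (cauchy_kernel z y))\<^sup>2 \<partial>M)"

definition cauchy_variance :: "real measure \<Rightarrow> complex \<Rightarrow> real" where
  "cauchy_variance M z = cauchy_norm_sq M z - (cmod (cauchy_G M z))\<^sup>2"

lemma cauchy_G_eq_integral_kernel: "cauchy_G M z = (\<integral>y. cauchy_kernel z y \<partial>M)"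
  unfolding cauchy_G_def cauchy_kernel_def ..

lemma norm_cauchy_kernel_le:
  assumes "Im z \<noteq> 0"
  shows "cmod (cauchy_kernel z y) \<le> 1 / \<bar>Im z\<bar>"
proof -
  have "\<bar>Im z\<bar> \<le> cmod (z - of_real y)"
    using abs_Im_le_cmod[of "z - of_real y"] by simp
  then show ?thesis
    using assms by (simp add: cauchy_kernel_def norm_divide frac_le)
qed

lemma cmod_cauchy_kernel_sq: "(cmod (cauchy_kernel z y))\<^sup>2 = 1 / ((y - Re z)\<^sup>2 + (Im z)\<^sup>2)"
  by (simp add: cauchy_kernel_def norm_divide cmod_power2 power_divide power2_commute)

lemma Im_cauchy_kernel: "Im (cauchy_kernel z y) = - Im z * (cmod (cauchy_kernel z y))\<^sup>2"
  unfolding cmod_cauchy_kernel_sq by (simp add: cauchy_kernel_def Im_divide power2_commute)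

lemma Re_cauchy_kernel: "Re (cauchy_kernel z y) = (Re z - y) * (cmod (cauchy_kernel z y))\<^sup>2"
  unfolding cmod_cauchy_kernel_sq by (simp add: cauchy_kernel_def Re_divide power2_commute)

lemma cauchy_kernel_diff:
  assumes "Im z \<noteq> 0"
  shows "cauchy_kernel z y - cauchy_kernel z y' = of_real (y - y') * cauchy_kernel z y * cauchy_kernel z y'"
proof -
  have "z - of_real y \<noteq> 0" "z - of_real y' \<noteq> 0"
    using assms by (auto simp: complex_eq_iff)
  then show ?thesis
    by (simp add: cauchy_kernel_def field_simps)
qed

lemma cmod_cauchy_kernel_sq_ge:
  assumes "Im w \<noteq> 0"
  shows "1 / (1 + y\<^sup>2) / (2 * (cmod w)\<^sup>2 + 2) \<le> (cmod (cauchy_kernel w y))\<^sup>2"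
proof -
  have "cmod (w - of_real y) \<le> cmod w + \<bar>y\<bar>"
    using norm_triangle_ineq4[of w "of_real y"] by simp
  then have "(cmod (w - of_real y))\<^sup>2 \<le> (cmod w + \<bar>y\<bar>)\<^sup>2"
    by (intro power_mono) auto
  also have "\<dots> \<le> 2 * (cmod w)\<^sup>2 + 2 * y\<^sup>2"
    using sum_squares_bound[of "cmod w" "\<bar>y\<bar>"] by (simp add: power2_sum algebra_simps)
  also have "\<dots> \<le> (2 * (cmod w)\<^sup>2 + 2) * (1 + y\<^sup>2)"
    by (simp add: algebra_simps)
  finally have le: "(cmod (w - of_real y))\<^sup>2 \<le> (2 * (cmod w)\<^sup>2 + 2) * (1 + y\<^sup>2)" .
  have "w - of_real y \<noteq> 0"
    using assms by (auto simp: complex_eq_iff)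
  moreover have "0 < 2 * (cmod w)\<^sup>2 + 2" "0 < 1 + y\<^sup>2"
    by (auto intro: add_nonneg_pos add_pos_nonneg)
  ultimately have "1 / ((2 * (cmod w)\<^sup>2 + 2) * (1 + y\<^sup>2)) \<le> 1 / (cmod (w - of_real y))\<^sup>2"
    using le by (intro divide_left_mono mult_pos_pos) auto
  then show ?thesis
    by (simp add: cauchy_kernel_def norm_divide power_divide field_simps)
qed

lemma cmod_cauchy_kernel_sq_le_i:
  assumes "x \<le> -1" "x \<le> a - 1" "a < y"
  shows "(cmod (cauchy_kernel (Complex x e) y))\<^sup>2 \<le> (2 + a\<^sup>2) * (cmod (cauchy_kernel \<i> y))\<^sup>2"
proof -
  have "0 < (y - x)\<^sup>2"
    using assms by simp
  have "(cmod (cauchy_kernel (Complex x e) y))\<^sup>2 \<le> 1 / (y - x)\<^sup>2"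
    unfolding cmod_cauchy_kernel_sq using \<open>0 < (y - x)\<^sup>2\<close>
    by (intro divide_left_mono mult_pos_pos add_pos_nonneg) auto
  also have "\<dots> \<le> (2 + a\<^sup>2) / (1 + y\<^sup>2)"
    using one_add_power2_le_mult_power2_diff[OF assms] \<open>0 < (y - x)\<^sup>2\<close>
    by (simp add: field_simps add_pos_nonneg)
  finally show ?thesis
    by (simp add: cmod_cauchy_kernel_sq add.commute)
qed

lemma cmod_cauchy_kernel_diff_sq_le_i:
  assumes "x \<le> -1" "x \<le> a - 1" "a < y" "a < y'" "0 < e"
  shows "(cmod (cauchy_kernel (Complex x e) y - cauchy_kernel (Complex x e) y'))\<^sup>2
    \<le> (2 + a\<^sup>2)\<^sup>2 * (cmod (cauchy_kernel \<i> y - cauchy_kernel \<i> y'))\<^sup>2"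
proof -
  let ?k = "cauchy_kernel (Complex x e)" and ?ki = "cauchy_kernel \<i>"
  have "(cmod (?k y))\<^sup>2 * (cmod (?k y'))\<^sup>2
      \<le> ((2 + a\<^sup>2) * (cmod (?ki y))\<^sup>2) * ((2 + a\<^sup>2) * (cmod (?ki y'))\<^sup>2)"
    using cmod_cauchy_kernel_sq_le_i[OF assms(1-3)] cmod_cauchy_kernel_sq_le_i[OF assms(1,2,4)]
    by (intro mult_mono) auto
  also have "\<dots> = (2 + a\<^sup>2)\<^sup>2 * ((cmod (?ki y))\<^sup>2 * (cmod (?ki y'))\<^sup>2)"
    by (simp add: power2_eq_square algebra_simps)
  finally have "(y - y')\<^sup>2 * ((cmod (?k y))\<^sup>2 * (cmod (?k y'))\<^sup>2)
      \<le> (y - y')\<^sup>2 * ((2 + a\<^sup>2)\<^sup>2 * ((cmod (?ki y))\<^sup>2 * (cmod (?ki y'))\<^sup>2))"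
    by (rule mult_left_mono) simp
  then show ?thesis
    using assms(5) by (simp add: cauchy_kernel_diff norm_mult power_mult_distrib algebra_simps
        flip: of_real_diff)
qed

context real_distribution
begin

lemma integrable_cauchy_kernel:
  assumes "Im z \<noteq> 0"
  shows "integrable M (cauchy_kernel z)"
  using assms norm_cauchy_kernel_le[OF assms]
  by (intro integrable_const_bound[where B = "1 / \<bar>Im z\<bar>"]) (auto simp: cauchy_kernel_def[abs_def])

lemma integrable_cmod_cauchy_kernel_sq:
  assumes "Im z \<noteq> 0"
  shows "integrable M (\<lambda>y. (cmod (cauchy_kernel z y))\<^sup>2)"
proof (rule integrable_const_bound[where B = "(1 / \<bar>Im z\<bar>)\<^sup>2"])
  show "AE y in M. norm ((cmod (cauchy_kernel z y))\<^sup>2) \<le> (1 / \<bar>Im z\<bar>)\<^sup>2"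
    using norm_cauchy_kernel_le[OF assms] by (auto intro: power_mono)
qed (auto simp: cauchy_kernel_def)

lemma Im_cauchy_G:
  assumes "Im z \<noteq> 0"
  shows "Im (cauchy_G M z) = - Im z * cauchy_norm_sq M z"
proof -
  have "Im (cauchy_G M z) = (\<integral>y. Im (cauchy_kernel z y) \<partial>M)"
    using integrable_cauchy_kernel[OF assms] by (simp add: cauchy_G_eq_integral_kernel)
  then show ?thesis
    by (simp add: Im_cauchy_kernel cauchy_norm_sq_def)
qed

lemma Re_cauchy_G:
  assumes "Im z \<noteq> 0"
  shows "Re (cauchy_G M z) = (\<integral>y. (Re z - y) * (cmod (cauchy_kernel z y))\<^sup>2 \<partial>M)"
proof -
  have "Re (cauchy_G M z) = (\<integral>y. Re (cauchy_kernel z y) \<partial>M)"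
    using integrable_cauchy_kernel[OF assms] by (simp add: cauchy_G_eq_integral_kernel)
  then show ?thesis
    by (simp add: Re_cauchy_kernel)
qed

lemma cauchy_norm_sq_pos:
  assumes "Im z \<noteq> 0"
  shows "0 < cauchy_norm_sq M z"
proof -
  have "(\<integral>y. 0 \<partial>M) < cauchy_norm_sq M z"
    unfolding cauchy_norm_sq_def using assms
    by (intro integral_less_AE_space integrable_cmod_cauchy_kernel_sq)
      (auto simp: cmod_cauchy_kernel_sq emeasure_space_1[simplified] intro!: add_nonneg_pos)
  then show ?thesis
    by simp
qed

lemma cauchy_G_nonzero:
  assumes "Im z \<noteq> 0"
  shows "cauchy_G M z \<noteq> 0"
  using Im_cauchy_G[OF assms] cauchy_norm_sq_pos[OF assms] assms by auto

lemma cauchy_variance_eq: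
  assumes "Im z \<noteq> 0"
  shows "cauchy_variance M z
    = (\<integral>y. (\<integral>y'. (cmod (cauchy_kernel z y - cauchy_kernel z y'))\<^sup>2 \<partial>M) \<partial>M) / 2"
  using double_integral_cmod_diff_sq[OF integrable_cauchy_kernel integrable_cmod_cauchy_kernel_sq] assms
  by (simp add: cauchy_variance_def cauchy_norm_sq_def cauchy_G_eq_integral_kernel)

lemma cauchy_variance_nonneg:
  assumes "Im z \<noteq> 0"
  shows "0 \<le> cauchy_variance M z"
  unfolding cauchy_variance_eq[OF assms] by (intro divide_nonneg_pos integral_nonneg_AE AE_I2) auto

lemma Im_recip_H:
  assumes "Im z \<noteq> 0"
  shows "Im (recip_H M z) = Im z * cauchy_norm_sq M z / (cmod (cauchy_G M z))\<^sup>2"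
  using Im_cauchy_G[OF assms] by (simp add: recip_H_def Im_divide cmod_power2)

lemma Im_recip_H_minus:
  assumes "Im z \<noteq> 0"
  shows "Im (recip_H M z) - Im z = Im z * cauchy_variance M z / (cmod (cauchy_G M z))\<^sup>2"
  using cauchy_G_nonzero[OF assms]
  by (simp add: Im_recip_H[OF assms] cauchy_variance_def field_simps)

lemma Im_recip_H_ge:
  assumes "0 < Im z"
  shows "Im z \<le> Im (recip_H M z)"
proof -
  have "0 \<le> Im z * cauchy_variance M z / (cmod (cauchy_G M z))\<^sup>2"
    using cauchy_variance_nonneg[of z] assms by simp
  then show ?thesis
    using Im_recip_H_minus[of z] assms by simp
qed

lemma measure_ball_le_Im_cauchy_G:
  assumes "0 < e"
  shows "measure M (ball x e) \<le> 2 * e * - Im (cauchy_G M (Complex x e))"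
proof -
  let ?u = "\<lambda>y. e * (cmod (cauchy_kernel (Complex x e) y))\<^sup>2"
  have "1 / (2 * e) \<le> ?u y" if "y \<in> ball x e" for y
    using poisson_kernel_ge[OF that] by (simp add: cmod_cauchy_kernel_sq)
  then have "measure M (ball x e) \<le> 2 * e * (\<integral>y. ?u y \<partial>M)"
    using assms integrable_cmod_cauchy_kernel_sq[of "Complex x e"]
    by (intro measure_ball_le_integral) auto
  also have "(\<integral>y. ?u y \<partial>M) = - Im (cauchy_G M (Complex x e))"
    using assms by (simp add: Im_cauchy_G cauchy_norm_sq_def)
  finally show ?thesis .
qed

lemma cauchy_norm_sq_ge:
  assumes "Im w \<noteq> 0"
  shows "(\<integral>y. 1 / (1 + y\<^sup>2) \<partial>M) / (2 * (cmod w)\<^sup>2 + 2) \<le> cauchy_norm_sq M w"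
proof -
  have "integrable M (\<lambda>y. 1 / (1 + y\<^sup>2))"
    by (intro integrable_const_bound[where B = 1]) (auto simp: add_pos_nonneg)
  then have "(\<integral>y. 1 / (1 + y\<^sup>2) / (2 * (cmod w)\<^sup>2 + 2) \<partial>M) \<le> cauchy_norm_sq M w"
    unfolding cauchy_norm_sq_def using assms
    by (intro integral_mono integrable_divide integrable_cmod_cauchy_kernel_sq cmod_cauchy_kernel_sq_ge)
  then show ?thesis
    by (simp only: integral_divide_zero)
qed

lemma cauchy_norm_sq_le_of_AE_greater:
  assumes "AE y in M. b < y" "x < b" "0 < e"
  shows "cauchy_norm_sq M (Complex x e) \<le> 1 / (b - x)\<^sup>2"
proof -
  have "AE y in M. (cmod (cauchy_kernel (Complex x e) y))\<^sup>2 \<le> 1 / (b - x)\<^sup>2"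
    using assms(1)
  proof eventually_elim
    case (elim y)
    then have "(b - x)\<^sup>2 \<le> (y - x)\<^sup>2"
      using assms(2) by (intro power_mono) auto
    then have "(b - x)\<^sup>2 \<le> (y - x)\<^sup>2 + e\<^sup>2"
      using zero_le_power2[of e] by linarith
    then show ?case
      using assms(2) by (simp add: cmod_cauchy_kernel_sq frac_le)
  qed
  then have "cauchy_norm_sq M (Complex x e) \<le> (\<integral>y. 1 / (b - x)\<^sup>2 \<partial>M)"
    unfolding cauchy_norm_sq_def using assms(3)
    by (intro integral_mono_AE integrable_cmod_cauchy_kernel_sq) auto
  then show ?thesis
    by (simp add: prob_space[simplified])
qed

text \<open>The integrand \<open>(y - x) / ((y - x)\<^sup>2 + 1)\<close> below is \<open>- Re (cauchy_kernel (Complex x 1) y)\<close>: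
  a bounded continuous minorant of \<open>- Re (cauchy_kernel (Complex x e) y)\<close> for \<open>y > x\<close> and
  \<open>e \<le> 1\<close>, whose integral can be followed along a weakly continuous family.\<close>

lemma integrable_divide_power2_add_one: "integrable M (\<lambda>y. (y - x) / ((y - x)\<^sup>2 + 1))"
  using abs_divide_power2_add_one_le by (intro integrable_const_bound[where B = 1]) auto

lemma integral_divide_power2_add_one_le_cmod_cauchy_G:
  assumes "AE y in M. x < y" "0 < e" "e \<le> 1"
  shows "(\<integral>y. (y - x) / ((y - x)\<^sup>2 + 1) \<partial>M) \<le> cmod (cauchy_G M (Complex x e))"
proof -
  have "AE y in M. (y - x) / ((y - x)\<^sup>2 + 1) \<le> (y - x) * (cmod (cauchy_kernel (Complex x e) y))\<^sup>2"
    using assms(1)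
  proof eventually_elim
    case (elim y)
    have "e\<^sup>2 \<le> 1"
      using assms(2,3) by (simp add: power_le_one)
    then have "(y - x) / ((y - x)\<^sup>2 + 1) \<le> (y - x) / ((y - x)\<^sup>2 + e\<^sup>2)"
      using elim assms(2) by (intro divide_left_mono mult_pos_pos add_nonneg_pos) auto
    then show ?case
      by (simp add: cmod_cauchy_kernel_sq)
  qed
  moreover have "integrable M (\<lambda>y. (y - x) * (cmod (cauchy_kernel (Complex x e) y))\<^sup>2)"
  proof -
    have "integrable M (\<lambda>y. - Re (cauchy_kernel (Complex x e) y))"
      using integrable_cauchy_kernel[of "Complex x e"] assms(2) by auto
    then show ?thesis
      by (simp add: Re_cauchy_kernel algebra_simps)
  qed
  ultimately have "(\<integral>y. (y - x) / ((y - x)\<^sup>2 + 1) \<partial>M)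
      \<le> (\<integral>y. (y - x) * (cmod (cauchy_kernel (Complex x e) y))\<^sup>2 \<partial>M)"
    by (intro integral_mono_AE integrable_divide_power2_add_one)
  also have "\<dots> = - Re (cauchy_G M (Complex x e))"
    using assms(2) by (simp add: Re_cauchy_G algebra_simps flip: integral_minus)
  also have "\<dots> \<le> cmod (cauchy_G M (Complex x e))"
    using abs_Re_le_cmod[of "cauchy_G M (Complex x e)"] by simp
  finally show ?thesis .
qed

lemma integral_divide_power2_add_one_pos:
  assumes "AE y in M. x < y"
  shows "0 < (\<integral>y. (y - x) / ((y - x)\<^sup>2 + 1) \<partial>M)"
proof -
  have "(\<integral>y. 0 \<partial>M) < (\<integral>y. (y - x) / ((y - x)\<^sup>2 + 1) \<partial>M)"
    using assms
    by (intro integral_less_AE_space integrable_divide_power2_add_one)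
      (auto simp: emeasure_space_1[simplified] elim!: AE_mp intro!: divide_pos_pos add_nonneg_pos)
  then show ?thesis
    by simp
qed

lemma Im_recip_H_le_of_AE_greater:
  assumes "AE y in M. b < y" "x < b" "0 < e" "e \<le> 1"
  shows "Im (recip_H M (Complex x e)) \<le> e / ((b - x)\<^sup>2 * (\<integral>y. (y - x) / ((y - x)\<^sup>2 + 1) \<partial>M)\<^sup>2)"
proof -
  let ?c = "\<integral>y. (y - x) / ((y - x)\<^sup>2 + 1) \<partial>M"
  have AE_x: "AE y in M. x < y"
    using assms(1,2) by (auto elim: AE_mp)
  have "0 < ?c" "?c \<le> cmod (cauchy_G M (Complex x e))"
    using integral_divide_power2_add_one_pos[OF AE_x]
      integral_divide_power2_add_one_le_cmod_cauchy_G[OF AE_x assms(3,4)] by auto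
  then have "?c\<^sup>2 \<le> (cmod (cauchy_G M (Complex x e)))\<^sup>2"
    by (intro power_mono) auto
  have "Im (recip_H M (Complex x e)) = e * cauchy_norm_sq M (Complex x e) / (cmod (cauchy_G M (Complex x e)))\<^sup>2"
    using assms(3) by (simp add: Im_recip_H)
  also have "\<dots> \<le> e * (1 / (b - x)\<^sup>2) / ?c\<^sup>2"
    using cauchy_norm_sq_le_of_AE_greater[OF assms(1-3)] \<open>0 < ?c\<close> \<open>?c\<^sup>2 \<le> _\<close> assms(3)
    by (intro frac_le mult_left_mono) auto
  finally show ?thesis
    by simp
qed

lemma cauchy_variance_le_i:
  assumes "AE y in M. a < y" "x \<le> -1" "x \<le> a - 1" "0 < e"
  shows "cauchy_variance M (Complex x e) \<le> (2 + a\<^sup>2)\<^sup>2 * cauchy_variance M \<i>"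
proof -
  let ?k = "cauchy_kernel (Complex x e)" and ?ki = "cauchy_kernel \<i>"
  have int: "integrable M (\<lambda>y. \<integral>y'. (cmod (cauchy_kernel z y - cauchy_kernel z y'))\<^sup>2 \<partial>M)"
    if "Im z \<noteq> 0" for z
    using that by (intro integrable_integral_cmod_diff_sq integrable_cauchy_kernel
        integrable_cmod_cauchy_kernel_sq)
  have "AE y in M. (\<integral>y'. (cmod (?k y - ?k y'))\<^sup>2 \<partial>M) \<le> (2 + a\<^sup>2)\<^sup>2 * (\<integral>y'. (cmod (?ki y - ?ki y'))\<^sup>2 \<partial>M)"
    using assms(1)
  proof eventually_elim
    case (elim y)
    have "(\<integral>y'. (cmod (?k y - ?k y'))\<^sup>2 \<partial>M) \<le> (\<integral>y'. (2 + a\<^sup>2)\<^sup>2 * (cmod (?ki y - ?ki y'))\<^sup>2 \<partial>M)"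
      using assms elim
      by (intro integral_mono_AE integrable_mult_right integrable_cmod_diff_sq integrable_cauchy_kernel
          integrable_cmod_cauchy_kernel_sq) (auto elim!: AE_mp intro!: cmod_cauchy_kernel_diff_sq_le_i)
    then show ?case
      by simp
  qed
  then have "(\<integral>y. (\<integral>y'. (cmod (?k y - ?k y'))\<^sup>2 \<partial>M) \<partial>M)
      \<le> (\<integral>y. (2 + a\<^sup>2)\<^sup>2 * (\<integral>y'. (cmod (?ki y - ?ki y'))\<^sup>2 \<partial>M) \<partial>M)"
    using assms(4) by (intro integral_mono_AE integrable_mult_right int) auto
  then show ?thesis
    using assms(4) by (simp add: cauchy_variance_eq)
qed

lemma Im_recip_H_minus_le_i:
  assumes "AE y in M. a < y" "x \<le> -1" "x \<le> a - 1" "0 < e"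
    and "0 < c" "c \<le> cmod (cauchy_G M (Complex x e))"
  shows "Im (recip_H M (Complex x e)) - e \<le> e * (2 + a\<^sup>2)\<^sup>2 / c\<^sup>2 * (Im (recip_H M \<i>) - 1)"
proof -
  have "(cmod (cauchy_G M \<i>))\<^sup>2 \<le> 1"
  proof -
    have "cauchy_norm_sq M \<i> \<le> (\<integral>y. 1 \<partial>M)"
      unfolding cauchy_norm_sq_def
      by (intro integral_mono integrable_cmod_cauchy_kernel_sq)
        (auto simp: cmod_cauchy_kernel_sq divide_le_eq_1 add_nonneg_pos)
    then show ?thesis
      using cauchy_variance_nonneg[of \<i>] by (simp add: cauchy_variance_def prob_space[simplified])
  qed
  moreover have "0 < (cmod (cauchy_G M \<i>))\<^sup>2"
    using cauchy_G_nonzero[of \<i>] by simp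
  ultimately have "cauchy_variance M \<i> \<le> Im (recip_H M \<i>) - 1"
    using Im_recip_H_minus[of \<i>] cauchy_variance_nonneg[of \<i>] by (simp add: le_divide_eq mult_left_le)
  have "c\<^sup>2 \<le> (cmod (cauchy_G M (Complex x e)))\<^sup>2"
    using assms(5,6) by (intro power_mono) auto
  have "Im (recip_H M (Complex x e)) - e = e * cauchy_variance M (Complex x e) / (cmod (cauchy_G M (Complex x e)))\<^sup>2"
    using Im_recip_H_minus[of "Complex x e"] assms(4) by simp
  also have "\<dots> \<le> e * ((2 + a\<^sup>2)\<^sup>2 * cauchy_variance M \<i>) / c\<^sup>2"
    using cauchy_variance_le_i[OF assms(1-4)] cauchy_variance_nonneg[of \<i>] \<open>c\<^sup>2 \<le> _\<close> assms(4,5)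
    by (intro frac_le mult_left_mono) auto
  also have "\<dots> = e * (2 + a\<^sup>2)\<^sup>2 / c\<^sup>2 * cauchy_variance M \<i>"
    by simp
  also have "\<dots> \<le> e * (2 + a\<^sup>2)\<^sup>2 / c\<^sup>2 * (Im (recip_H M \<i>) - 1)"
    using \<open>cauchy_variance M \<i> \<le> _\<close> assms(4) by (intro mult_left_mono) auto
  finally show ?thesis .
qed

end

section \<open>The generator\<close>

definition nevanlinna_kernel :: "complex \<Rightarrow> real \<Rightarrow> complex" where
  "nevanlinna_kernel w y = (1 + of_real y * w) / (of_real y - w)"

lemma gen_A_eq_integral_kernel: "gen_A \<gamma> \<tau> w = - of_real \<gamma> + (\<integral>y. nevanlinna_kernel w y \<partial>\<tau>)"
  unfolding gen_A_def nevanlinna_kernel_def ..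

lemma Im_nevanlinna_kernel:
  "Im (nevanlinna_kernel w y) = Im w * (1 + y\<^sup>2) / ((y - Re w)\<^sup>2 + (Im w)\<^sup>2)"
  unfolding nevanlinna_kernel_def by (simp add: Im_divide power2_eq_square algebra_simps)

lemma Re_nevanlinna_kernel:
  assumes "Im w \<noteq> 0"
  shows "Re (nevanlinna_kernel w y) = - y + (1 + y\<^sup>2) * (y - Re w) / ((y - Re w)\<^sup>2 + (Im w)\<^sup>2)"
proof -
  have "0 < (y - Re w)\<^sup>2 + (Im w)\<^sup>2"
    using assms by (simp add: add_nonneg_pos)
  then show ?thesis
    unfolding nevanlinna_kernel_def by (simp add: Re_divide field_simps power2_eq_square)
qed

lemma norm_nevanlinna_kernel_le:
  assumes "Im w \<noteq> 0"
  shows "cmod (nevanlinna_kernel w y) \<le> cmod w + cmod (1 + w\<^sup>2) / \<bar>Im w\<bar>"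
proof -
  have le: "\<bar>Im w\<bar> \<le> cmod (of_real y - w)"
    using abs_Im_le_cmod[of "of_real y - w"] by simp
  have "of_real y - w \<noteq> 0"
    using assms by (auto simp: complex_eq_iff)
  then have "nevanlinna_kernel w y = w + (1 + w\<^sup>2) / (of_real y - w)"
    unfolding nevanlinna_kernel_def by (simp add: field_simps power2_eq_square)
  then have "cmod (nevanlinna_kernel w y) \<le> cmod w + cmod (1 + w\<^sup>2) / cmod (of_real y - w)"
    by (metis norm_divide norm_triangle_ineq)
  also have "\<dots> \<le> cmod w + cmod (1 + w\<^sup>2) / \<bar>Im w\<bar>"
    using le assms by (intro add_left_mono divide_left_mono mult_pos_pos) auto
  finally show ?thesis .
qed

lemma Im_nevanlinna_kernel_le:
  assumes "c \<le> -1" "c \<le> a - 1" "a < y" "Re w \<le> c" "0 < Im w"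
  shows "Im (nevanlinna_kernel w y) \<le> (2 + a\<^sup>2) * Im w"
proof -
  define d where "d = y - Re w"
  have "y - c \<le> d" "1 \<le> y - c"
    using assms by (auto simp: d_def)
  then have "0 < d\<^sup>2" "(y - c)\<^sup>2 \<le> d\<^sup>2"
    by (auto intro: power_mono)
  have "(1 + y\<^sup>2) / (d\<^sup>2 + (Im w)\<^sup>2) \<le> (1 + y\<^sup>2) / d\<^sup>2"
    using \<open>0 < d\<^sup>2\<close> by (intro divide_left_mono mult_pos_pos add_pos_nonneg) auto
  also have "\<dots> \<le> 2 + a\<^sup>2"
  proof -
    have "(2 + a\<^sup>2) * (y - c)\<^sup>2 \<le> (2 + a\<^sup>2) * d\<^sup>2"
      using \<open>(y - c)\<^sup>2 \<le> d\<^sup>2\<close> by (intro mult_left_mono) auto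
    then show ?thesis
      using one_add_power2_le_mult_power2_diff[OF assms(1-3)] \<open>0 < d\<^sup>2\<close> by (simp add: divide_le_eq)
  qed
  finally have "Im w * ((1 + y\<^sup>2) / (d\<^sup>2 + (Im w)\<^sup>2)) \<le> Im w * (2 + a\<^sup>2)"
    using assms(5) by (intro mult_left_mono) auto
  then show ?thesis
    by (simp add: Im_nevanlinna_kernel d_def mult.commute)
qed

lemma one_add_mult_divide_le:
  fixes a c y :: real
  assumes "c \<le> -1" "c \<le> a - 1" "a < y"
  shows "(1 + c * y) / (y - c) \<le> 1 + \<bar>c\<bar> * \<bar>a\<bar>"
proof -
  have "c * y \<le> \<bar>c\<bar> * \<bar>a\<bar>"
  proof (cases "0 \<le> y")
    case True
    then have "c * y \<le> 0"
      using assms(1) by (simp add: mult_nonpos_nonneg)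
    also have "0 \<le> \<bar>c\<bar> * \<bar>a\<bar>"
      by simp
    finally show ?thesis .
  next
    case False
    then have "\<bar>y\<bar> \<le> \<bar>a\<bar>"
      using assms(3) by linarith
    then show ?thesis
      by (metis abs_ge_self abs_mult abs_ge_zero mult_left_mono order_trans)
  qed
  moreover have "1 \<le> y - c"
    using assms by linarith
  ultimately have "1 + c * y \<le> (1 + \<bar>c\<bar> * \<bar>a\<bar>) * (y - c)"
    using mult_left_mono[of 1 "y - c" "1 + \<bar>c\<bar> * \<bar>a\<bar>"] by simp
  then show ?thesis
    using \<open>1 \<le> y - c\<close> by (simp add: divide_le_eq)
qed

lemma Re_nevanlinna_kernel_le:
  assumes "c \<le> -1" "c \<le> a - 1" "a < y" "Re w \<le> c" "Im w \<noteq> 0"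
  shows "Re (nevanlinna_kernel w y) \<le> 1 + \<bar>c\<bar> * \<bar>a\<bar>"
proof -
  define d where "d = y - Re w"
  have "y - c \<le> d" "1 \<le> y - c"
    using assms by (auto simp: d_def)
  have "(1 + y\<^sup>2) * d / (d\<^sup>2 + (Im w)\<^sup>2) \<le> (1 + y\<^sup>2) * d / d\<^sup>2"
    using \<open>y - c \<le> d\<close> \<open>1 \<le> y - c\<close> by (intro divide_left_mono mult_pos_pos add_pos_nonneg) auto
  also have "\<dots> = (1 + y\<^sup>2) / d"
    by (simp add: power2_eq_square)
  also have "\<dots> \<le> (1 + y\<^sup>2) / (y - c)"
    using \<open>y - c \<le> d\<close> \<open>1 \<le> y - c\<close> by (intro divide_left_mono) auto
  finally have "Re (nevanlinna_kernel w y) \<le> - y + (1 + y\<^sup>2) / (y - c)"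
    using assms(5) by (simp add: Re_nevanlinna_kernel d_def)
  also have "\<dots> = (1 + c * y) / (y - c)"
    using \<open>1 \<le> y - c\<close> by (simp add: field_simps power2_eq_square)
  also have "\<dots> \<le> 1 + \<bar>c\<bar> * \<bar>a\<bar>"
    using assms(1-3) by (rule one_add_mult_divide_le)
  finally show ?thesis .
qed

context finite_borel_measure
begin

lemma integrable_nevanlinna_kernel:
  assumes "Im w \<noteq> 0"
  shows "integrable M (nevanlinna_kernel w)"
  using norm_nevanlinna_kernel_le[OF assms]
  by (intro integrable_const_bound[where B = "cmod w + cmod (1 + w\<^sup>2) / \<bar>Im w\<bar>"])
    (auto simp: nevanlinna_kernel_def[abs_def])

lemma Im_gen_A:
  assumes "Im w \<noteq> 0"
  shows "Im (gen_A \<gamma> M w) = (\<integral>y. Im (nevanlinna_kernel w y) \<partial>M)"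
  using integrable_nevanlinna_kernel[OF assms] by (simp add: gen_A_eq_integral_kernel)

lemma Re_gen_A:
  assumes "Im w \<noteq> 0"
  shows "Re (gen_A \<gamma> M w) = - \<gamma> + (\<integral>y. Re (nevanlinna_kernel w y) \<partial>M)"
  using integrable_nevanlinna_kernel[OF assms] by (simp add: gen_A_eq_integral_kernel)

lemma measure_ball_le_Im_gen_A:
  assumes "0 < e"
  shows "measure M (ball x e) \<le> 2 * e * Im (gen_A \<gamma> M (Complex x e))"
proof -
  have "1 / (2 * e) \<le> Im (nevanlinna_kernel (Complex x e) y)" if "y \<in> ball x e" for y
  proof -
    have "e / ((y - x)\<^sup>2 + e\<^sup>2) \<le> e * (1 + y\<^sup>2) / ((y - x)\<^sup>2 + e\<^sup>2)"
      using assms by (intro divide_right_mono) auto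
    then show ?thesis
      using poisson_kernel_ge[OF that] by (simp add: Im_nevanlinna_kernel)
  qed
  moreover have "0 \<le> Im (nevanlinna_kernel (Complex x e) y)" for y
    using assms by (simp add: Im_nevanlinna_kernel)
  moreover have "integrable M (\<lambda>y. Im (nevanlinna_kernel (Complex x e) y))"
    using assms integrable_nevanlinna_kernel[of "Complex x e"] by auto
  ultimately have "measure M (ball x e) \<le> 2 * e * (\<integral>y. Im (nevanlinna_kernel (Complex x e) y) \<partial>M)"
    using assms by (intro measure_ball_le_integral)
  then show ?thesis
    using assms by (simp add: Im_gen_A)
qed

lemma Im_gen_A_le:
  assumes "AE y in M. a < y" "c \<le> -1" "c \<le> a - 1" "Re w \<le> c" "0 < Im w"
  shows "Im (gen_A \<gamma> M w) \<le> (2 + a\<^sup>2) * measure M (space M) * Im w"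
proof -
  have "(\<integral>y. Im (nevanlinna_kernel w y) \<partial>M) \<le> (\<integral>y. (2 + a\<^sup>2) * Im w \<partial>M)"
    using assms(1) integrable_nevanlinna_kernel[of w] assms(5)
    by (intro integral_mono_AE) (auto elim!: AE_mp intro!: Im_nevanlinna_kernel_le assms(2-5))
  then show ?thesis
    using assms(5) by (simp add: Im_gen_A mult.commute mult.left_commute)
qed

lemma Re_gen_A_le:
  assumes "AE y in M. a < y" "c \<le> -1" "c \<le> a - 1" "Re w \<le> c" "0 < Im w"
  shows "Re (gen_A \<gamma> M w) \<le> \<bar>\<gamma>\<bar> + (1 + \<bar>c\<bar> * \<bar>a\<bar>) * measure M (space M)"
proof -
  have "(\<integral>y. Re (nevanlinna_kernel w y) \<partial>M) \<le> (\<integral>y. 1 + \<bar>c\<bar> * \<bar>a\<bar> \<partial>M)"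
    using assms(1) integrable_nevanlinna_kernel[of w] assms(5)
    by (intro integral_mono_AE) (auto elim!: AE_mp intro!: Re_nevanlinna_kernel_le assms(2-4))
  then show ?thesis
    using assms(5) by (simp add: Re_gen_A mult.commute)
qed

end

section \<open>Monotone convolution semigroups\<close>

locale monotone_semigroup_pair =
  fixes \<mu> :: "real \<Rightarrow> real measure" and \<gamma> :: real and \<tau> :: "real measure"
  assumes semigroup: "monotone_conv_semigroup \<mu>"
    and pair: "associated_pair \<mu> \<gamma> \<tau>"
begin

lemma real_distribution_mu: "0 \<le> t \<Longrightarrow> real_distribution (\<mu> t)"
  using semigroup unfolding monotone_conv_semigroup_def real_distribution_def real_distribution_axioms_def
  by simp

lemma finite_borel_measure_tau: "finite_borel_measure \<tau>"
  using pair unfolding associated_pair_def finite_borel_measure_def finite_borel_measure_axioms_def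
  by simp

lemma mu_0: "\<mu> 0 = return borel 0"
  using semigroup unfolding monotone_conv_semigroup_def by simp

lemma recip_H_add:
  "0 \<le> s \<Longrightarrow> 0 \<le> t \<Longrightarrow> 0 < Im z \<Longrightarrow> recip_H (\<mu> (s + t)) z = recip_H (\<mu> s) (recip_H (\<mu> t) z)"
  using semigroup unfolding monotone_conv_semigroup_def is_monotone_conv_def upper_half_def by auto

lemma continuous_on_integral_mu:
  fixes f :: "real \<Rightarrow> real"
  assumes "continuous_on UNIV f" "bounded (range f)"
  shows "continuous_on {0..} (\<lambda>t. \<integral>x. f x \<partial>\<mu> t)"
proof -
  have "weakly_continuous_family \<mu>"
    using semigroup by (simp add: monotone_conv_semigroup_def)
  then show ?thesis
    using assms unfolding weakly_continuous_family_def by blast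
qed

lemma recip_H_mu_0: "Im z \<noteq> 0 \<Longrightarrow> recip_H (\<mu> 0) z = z"
  using pair unfolding associated_pair_def by simp

lemma recip_H_has_vector_derivative:
  "Im z \<noteq> 0 \<Longrightarrow> 0 \<le> t \<Longrightarrow>
    ((\<lambda>s. recip_H (\<mu> s) z) has_vector_derivative gen_A \<gamma> \<tau> (recip_H (\<mu> t) z)) (at t within {0..})"
  using pair unfolding associated_pair_def by simp

lemma continuous_on_recip_H: "Im z \<noteq> 0 \<Longrightarrow> continuous_on {0..} (\<lambda>s. recip_H (\<mu> s) z)"
  unfolding continuous_on_eq_continuous_within
  using has_vector_derivative_continuous[OF recip_H_has_vector_derivative] by auto

lemma Re_Im_recip_H_has_real_derivative:
  assumes "Im z \<noteq> 0" "0 < t"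
  shows "((\<lambda>s. Re (recip_H (\<mu> s) z)) has_real_derivative Re (gen_A \<gamma> \<tau> (recip_H (\<mu> t) z))) (at t)"
    and "((\<lambda>s. Im (recip_H (\<mu> s) z)) has_real_derivative Im (gen_A \<gamma> \<tau> (recip_H (\<mu> t) z))) (at t)"
proof -
  have "t \<in> interior {0..}"
    using assms(2) by (simp add: interior_Ici[of "-1"])
  then have "at t within {0..} = at t"
    by (rule at_within_interior)
  then have "((\<lambda>s. recip_H (\<mu> s) z) has_vector_derivative gen_A \<gamma> \<tau> (recip_H (\<mu> t) z)) (at t)"
    using recip_H_has_vector_derivative[OF assms(1), of t] assms(2) by simp
  then show "((\<lambda>s. Re (recip_H (\<mu> s) z)) has_real_derivative Re (gen_A \<gamma> \<tau> (recip_H (\<mu> t) z))) (at t)"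
    and "((\<lambda>s. Im (recip_H (\<mu> s) z)) has_real_derivative Im (gen_A \<gamma> \<tau> (recip_H (\<mu> t) z))) (at t)"
    unfolding has_vector_derivative_complex_iff by simp_all
qed

lemma Im_recip_H_difference_quotient_tendsto:
  assumes "Im z \<noteq> 0"
  shows "((\<lambda>s. (Im (recip_H (\<mu> s) z) - Im z) / s) \<longlongrightarrow> Im (gen_A \<gamma> \<tau> z)) (at_right 0)"
proof -
  have "((\<lambda>s. Im (recip_H (\<mu> s) z)) has_real_derivative Im (gen_A \<gamma> \<tau> z)) (at 0 within {0..})"
    using recip_H_has_vector_derivative[OF assms, of 0] recip_H_mu_0[OF assms]
    by (simp add: has_vector_derivative_complex_iff)
  then have "((\<lambda>s. (Im (recip_H (\<mu> s) z) - Im z) / s) \<longlongrightarrow> Im (gen_A \<gamma> \<tau> z)) (at 0 within {0..})"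
    using recip_H_mu_0[OF assms] by (simp add: has_field_derivative_iff)
  then show ?thesis
    by (rule tendsto_within_subset) auto
qed

lemma Re_recip_H_lt:
  assumes A: "\<And>w. Re w < c \<Longrightarrow> 0 < Im w \<Longrightarrow> Re (gen_A \<gamma> \<tau> w) \<le> L"
    and "0 \<le> L" "0 < Im z" "Re z + L * t < c" "0 \<le> s" "s \<le> t"
  shows "Re (recip_H (\<mu> s) z) < c"
proof (rule below_barrier_of_deriv_le[where g = "\<lambda>s. Re (recip_H (\<mu> s) z)"
      and g' = "\<lambda>r. Re (gen_A \<gamma> \<tau> (recip_H (\<mu> r) z))"])
  show "continuous_on {0..t} (\<lambda>s. Re (recip_H (\<mu> s) z))"
    using assms(3) by (intro continuous_intros continuous_on_subset[OF continuous_on_recip_H]) auto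
  show "((\<lambda>s. Re (recip_H (\<mu> s) z)) has_real_derivative Re (gen_A \<gamma> \<tau> (recip_H (\<mu> r) z))) (at r)"
    if "0 < r" "r < t" for r
    using Re_Im_recip_H_has_real_derivative(1) assms(3) that by simp
  show "Re (gen_A \<gamma> \<tau> (recip_H (\<mu> r) z)) \<le> L"
    if "0 < r" "r < t" "Re (recip_H (\<mu> r) z) < c" for r
    using A that real_distribution.Im_recip_H_ge[OF real_distribution_mu, of r z] assms(3) by force
qed (use assms recip_H_mu_0 in auto)

lemma Im_recip_H_le_exp:
  assumes A: "\<And>w. Re w < c \<Longrightarrow> 0 < Im w \<Longrightarrow> Im (gen_A \<gamma> \<tau> w) \<le> K * Im w"
    and "0 < Im z" "0 \<le> t" and left: "\<And>s. 0 \<le> s \<Longrightarrow> s \<le> t \<Longrightarrow> Re (recip_H (\<mu> s) z) < c"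
  shows "Im (recip_H (\<mu> t) z) \<le> Im z * exp (K * t)"
proof -
  have "Im (recip_H (\<mu> t) z) \<le> Im (recip_H (\<mu> 0) z) * exp (K * t)"
  proof (rule le_exp_of_deriv_le[where g = "\<lambda>s. Im (recip_H (\<mu> s) z)"
        and g' = "\<lambda>r. Im (gen_A \<gamma> \<tau> (recip_H (\<mu> r) z))"])
    show "continuous_on {0..t} (\<lambda>s. Im (recip_H (\<mu> s) z))"
      using assms(2) by (intro continuous_intros continuous_on_subset[OF continuous_on_recip_H]) auto
    show "((\<lambda>s. Im (recip_H (\<mu> s) z)) has_real_derivative Im (gen_A \<gamma> \<tau> (recip_H (\<mu> r) z))) (at r)"
      if "0 < r" "r < t" for r
      using Re_Im_recip_H_has_real_derivative(2) assms(2) that by simp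
    show "Im (gen_A \<gamma> \<tau> (recip_H (\<mu> r) z)) \<le> K * Im (recip_H (\<mu> r) z)"
      if "0 < r" "r < t" for r
      using A left[of r] that real_distribution.Im_recip_H_ge[OF real_distribution_mu, of r z] assms(2)
      by force
  qed fact
  then show ?thesis
    using recip_H_mu_0 assms(2) by simp
qed

lemma measure_ball_le_of_generator_bounds:
  assumes Re_A: "\<And>w. Re w < c \<Longrightarrow> 0 < Im w \<Longrightarrow> Re (gen_A \<gamma> \<tau> w) \<le> L"
    and Im_A: "\<And>w. Re w < c \<Longrightarrow> 0 < Im w \<Longrightarrow> Im (gen_A \<gamma> \<tau> w) \<le> K * Im w"
    and "c \<le> -1" "0 \<le> L" "0 \<le> t" "x < c - L * t" "0 < e"
  shows "measure (\<mu> t) (ball x e) \<le> 2 * exp (K * t) * e\<^sup>2"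
proof -
  interpret mu: real_distribution "\<mu> t"
    by (rule real_distribution_mu) fact
  let ?z = "Complex x e"
  let ?w = "recip_H (\<mu> t) ?z"
  have left: "Re (recip_H (\<mu> s) ?z) < c" if "0 \<le> s" "s \<le> t" for s
    using that assms(4-7) by (intro Re_recip_H_lt[where c = c and L = L]) (auto intro: Re_A)
  have "Im ?w \<le> e * exp (K * t)"
    using Im_recip_H_le_exp[where c = c and K = K and z = ?z and t = t] Im_A assms(5,7) left
    by simp
  moreover have "- Im (cauchy_G (\<mu> t) ?z) \<le> Im ?w"
  proof -
    have "1 \<le> cmod ?w"
      using left[of t] assms(3,5) abs_Re_le_cmod[of ?w] by simp
    moreover have "0 \<le> Im ?w"
      using mu.Im_recip_H_ge[of ?z] assms(7) by simp
    ultimately have "- Im (1 / ?w) \<le> Im ?w"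
      by (rule neg_Im_one_div_le)
    then show ?thesis
      by (simp add: recip_H_def)
  qed
  ultimately have "- Im (cauchy_G (\<mu> t) ?z) \<le> e * exp (K * t)"
    by linarith
  have "measure (\<mu> t) (ball x e) \<le> 2 * e * - Im (cauchy_G (\<mu> t) ?z)"
    by (rule mu.measure_ball_le_Im_cauchy_G[OF \<open>0 < e\<close>])
  also have "\<dots> \<le> 2 * e * (e * exp (K * t))"
    using \<open>- Im (cauchy_G (\<mu> t) ?z) \<le> e * exp (K * t)\<close> \<open>0 < e\<close> by (intro mult_left_mono) auto
  also have "\<dots> = 2 * exp (K * t) * e\<^sup>2"
    by (simp add: power2_eq_square)
  finally show ?thesis .
qed

lemma bdd_below_msupp_mu_of_tau:
  assumes "bdd_below (msupp \<tau>)" "0 \<le> t"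
  shows "bdd_below (msupp (\<mu> t))"
proof -
  interpret tau: finite_borel_measure \<tau>
    by (rule finite_borel_measure_tau)
  interpret mu: real_distribution "\<mu> t"
    by (rule real_distribution_mu) fact
  obtain a where a: "AE y in \<tau>. a < y"
    using assms(1) tau.bdd_below_msupp_iff_AE by blast
  define c where "c = min a 0 - 1"
  have c: "c \<le> -1" "c \<le> a - 1"
    by (auto simp: c_def)
  define L where "L = \<bar>\<gamma>\<bar> + (1 + \<bar>c\<bar> * \<bar>a\<bar>) * measure \<tau> (space \<tau>)"
  define K where "K = (2 + a\<^sup>2) * measure \<tau> (space \<tau>)"
  have "0 \<le> L"
    by (simp add: L_def)
  have Re_A: "Re (gen_A \<gamma> \<tau> w) \<le> L" if "Re w < c" "0 < Im w" for w
    using tau.Re_gen_A_le[OF a c] that by (simp add: L_def)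
  have Im_A: "Im (gen_A \<gamma> \<tau> w) \<le> K * Im w" if "Re w < c" "0 < Im w" for w
    using tau.Im_gen_A_le[OF a c] that by (simp add: K_def)
  have "AE y in \<mu> t. c - L * t - 1 < y"
    using measure_ball_le_of_generator_bounds[where c = c and L = L and K = K] Re_A Im_A c(1)
      \<open>0 \<le> L\<close> assms(2)
    by (intro mu.AE_greater_of_measure_ball_le[of "c - L * t"] exI[of _ "2 * exp (K * t)"]) auto
  then show ?thesis
    unfolding mu.bdd_below_msupp_iff_AE by (rule exI)
qed

lemma uniform_lower_bound_integral_inverse_sq:
  assumes "0 \<le> T"
  obtains \<kappa> where "0 < \<kappa>" "\<And>s. s \<in> {0..T} \<Longrightarrow> \<kappa> \<le> (\<integral>y. 1 / (1 + y\<^sup>2) \<partial>\<mu> s)"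
proof -
  let ?\<kappa> = "\<lambda>s. \<integral>y. 1 / (1 + y\<^sup>2) \<partial>\<mu> s"
  have "continuous_on {0..} ?\<kappa>"
  proof (rule continuous_on_integral_mu)
    show "continuous_on UNIV (\<lambda>y::real. 1 / (1 + y\<^sup>2))"
      by (intro continuous_intros) (auto simp: add_pos_nonneg)
    show "bounded (range (\<lambda>y::real. 1 / (1 + y\<^sup>2)))"
      unfolding bounded_iff by (intro exI[of _ 1]) (auto simp: add_pos_nonneg)
  qed
  then have "continuous_on {0..T} ?\<kappa>"
    by (rule continuous_on_subset) auto
  then have "\<exists>s0\<in>{0..T}. \<forall>s\<in>{0..T}. ?\<kappa> s0 \<le> ?\<kappa> s"
    using assms by (intro continuous_attains_inf) auto
  then obtain s0 where s0: "s0 \<in> {0..T}" "\<And>s. s \<in> {0..T} \<Longrightarrow> ?\<kappa> s0 \<le> ?\<kappa> s"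
    by blast
  interpret mu: real_distribution "\<mu> s0"
    using s0(1) by (intro real_distribution_mu) simp
  have "(\<integral>y. 0 \<partial>\<mu> s0) < ?\<kappa> s0"
    by (intro mu.integral_less_AE_space mu.integrable_const_bound[where B = 1])
      (auto simp: add_pos_nonneg mu.emeasure_space_1[simplified])
  then show ?thesis
    using that s0(2) by simp
qed

lemma neg_Im_cauchy_G_le_Im_recip_H_later:
  assumes "0 \<le> t" "t \<le> T" "0 < Im z" "1 \<le> cmod (recip_H (\<mu> t) z)"
  shows "- Im (cauchy_G (\<mu> t) z) \<le> Im (recip_H (\<mu> T) z)"
proof -
  let ?w = "recip_H (\<mu> t) z"
  have "0 < Im ?w"
    using real_distribution.Im_recip_H_ge[OF real_distribution_mu[OF assms(1)] assms(3)] assms(3)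
    by simp
  have "- Im (1 / ?w) \<le> Im ?w"
    using assms(4) \<open>0 < Im ?w\<close> by (intro neg_Im_one_div_le) auto
  also have "\<dots> \<le> Im (recip_H (\<mu> (T - t)) ?w)"
    using assms(2) \<open>0 < Im ?w\<close> by (intro real_distribution.Im_recip_H_ge real_distribution_mu) auto
  also have "\<dots> = Im (recip_H (\<mu> T) z)"
    using recip_H_add[of "T - t" t z] assms by simp
  finally show ?thesis
    by (simp add: recip_H_def)
qed

lemma Im_recip_H_mul_cauchy_norm_sq:
  assumes "0 \<le> s" "0 \<le> t" "0 < Im z"
  shows "Im (recip_H (\<mu> t) z) * cauchy_norm_sq (\<mu> s) (recip_H (\<mu> t) z)
    = Im z * cauchy_norm_sq (\<mu> (s + t)) z"
proof -
  let ?w = "recip_H (\<mu> t) z"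
  have "0 < Im ?w"
    using real_distribution.Im_recip_H_ge[OF real_distribution_mu[OF assms(2)] assms(3)] assms(3)
    by simp
  have "cauchy_G (\<mu> (s + t)) z = cauchy_G (\<mu> s) ?w"
    using recip_H_add[OF assms] by (simp add: recip_H_def)
  then show ?thesis
    using real_distribution.Im_cauchy_G[OF real_distribution_mu, of s ?w]
      real_distribution.Im_cauchy_G[OF real_distribution_mu, of "s + t" z] assms \<open>0 < Im ?w\<close>
    by simp
qed

text \<open>Since \<open>G\<^sub>T(z) = G\<^sub>T\<^sub>-\<^sub>t(H\<^sub>t z)\<close>, the product \<open>Im (H\<^sub>t z) * cauchy_norm_sq (\<mu> (T - t)) (H\<^sub>t z)\<close>
  equals \<open>Im z * cauchy_norm_sq (\<mu> T) z\<close>, which is small when \<open>z\<close> lies far to the left of the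
  support of \<open>\<mu> T\<close>; a uniform lower bound for the first norm then keeps \<open>H\<^sub>t z\<close> away from \<open>0\<close>.\<close>

lemma one_le_cmod_recip_H:
  assumes "0 \<le> t" "t \<le> T" "0 < e"
    and AE_T: "AE y in \<mu> T. b < y" and "x < b"
    and \<kappa>: "\<And>s. s \<in> {0..T} \<Longrightarrow> \<kappa> \<le> (\<integral>y. 1 / (1 + y\<^sup>2) \<partial>\<mu> s)" "0 < \<kappa>"
    and far: "4 \<le> \<kappa> * (b - x)\<^sup>2"
  shows "1 \<le> cmod (recip_H (\<mu> t) (Complex x e))"
proof -
  let ?z = "Complex x e"
  let ?w = "recip_H (\<mu> t) ?z"
  have "e \<le> Im ?w"
    using real_distribution.Im_recip_H_ge[OF real_distribution_mu[OF assms(1)], of ?z] assms(3)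
    by simp
  have "\<kappa> / (2 * (cmod ?w)\<^sup>2 + 2) \<le> cauchy_norm_sq (\<mu> (T - t)) ?w"
  proof -
    have "\<kappa> / (2 * (cmod ?w)\<^sup>2 + 2) \<le> (\<integral>y. 1 / (1 + y\<^sup>2) \<partial>\<mu> (T - t)) / (2 * (cmod ?w)\<^sup>2 + 2)"
      using \<kappa>(1)[of "T - t"] assms(1,2) by (intro divide_right_mono) (auto simp: add_nonneg_nonneg)
    also have "\<dots> \<le> cauchy_norm_sq (\<mu> (T - t)) ?w"
      using assms(2,3) \<open>e \<le> Im ?w\<close>
      by (intro real_distribution.cauchy_norm_sq_ge real_distribution_mu) auto
    finally show ?thesis .
  qed
  then have "e * (\<kappa> / (2 * (cmod ?w)\<^sup>2 + 2)) \<le> Im ?w * cauchy_norm_sq (\<mu> (T - t)) ?w"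
    using \<open>e \<le> Im ?w\<close> assms(3) \<kappa>(2) by (intro mult_mono) auto
  also have "\<dots> = e * cauchy_norm_sq (\<mu> T) ?z"
    using Im_recip_H_mul_cauchy_norm_sq[of "T - t" t ?z] assms by simp
  also have "\<dots> \<le> e * (1 / (b - x)\<^sup>2)"
    using real_distribution.cauchy_norm_sq_le_of_AE_greater[OF real_distribution_mu AE_T \<open>x < b\<close> \<open>0 < e\<close>] assms
    by (intro mult_left_mono) auto
  finally have "\<kappa> / (2 * (cmod ?w)\<^sup>2 + 2) \<le> 1 / (b - x)\<^sup>2"
    using assms(3) by (simp only: mult_le_cancel_left_pos)
  then have "\<kappa> * (b - x)\<^sup>2 \<le> 2 * (cmod ?w)\<^sup>2 + 2"
    using \<open>x < b\<close> by (simp add: field_simps add_pos_nonneg)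
  with far have "1 \<le> (cmod ?w)\<^sup>2"
    by simp
  then show ?thesis
    using power2_le_imp_le[of 1 "cmod ?w"] by simp
qed

lemma measure_ball_le_of_AE_greater_later:
  assumes t: "t \<in> {0..T}" and AE_T: "AE y in \<mu> T. b < y"
    and \<kappa>: "0 < \<kappa>" "\<And>s. s \<in> {0..T} \<Longrightarrow> \<kappa> \<le> (\<integral>y. 1 / (1 + y\<^sup>2) \<partial>\<mu> s)"
    and "x < b - 1 - 4 / \<kappa>" "0 < e" "e < 1"
  shows "measure (\<mu> t) (ball x e)
    \<le> 2 / ((b - x)\<^sup>2 * (\<integral>y. (y - x) / ((y - x)\<^sup>2 + 1) \<partial>\<mu> T)\<^sup>2) * e\<^sup>2"
proof -
  interpret mu: real_distribution "\<mu> t"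
    using t by (intro real_distribution_mu) simp
  interpret mu_T: real_distribution "\<mu> T"
    using t by (intro real_distribution_mu) simp
  have "0 < 4 / \<kappa>"
    using \<kappa>(1) by simp
  then have "1 \<le> b - x" "4 / \<kappa> \<le> b - x"
    using assms(5) by linarith+
  have "(b - x) * 1 \<le> (b - x) * (b - x)"
    using \<open>1 \<le> b - x\<close> by (intro mult_left_mono) auto
  with \<open>4 / \<kappa> \<le> b - x\<close> have "4 / \<kappa> \<le> (b - x)\<^sup>2"
    by (simp add: power2_eq_square)
  then have "4 \<le> \<kappa> * (b - x)\<^sup>2"
    using \<kappa>(1) by (simp add: pos_divide_le_eq mult.commute)
  then have "1 \<le> cmod (recip_H (\<mu> t) (Complex x e))"
    using t \<open>0 < e\<close> \<open>1 \<le> b - x\<close>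
    by (intro one_le_cmod_recip_H[OF _ _ _ AE_T _ \<kappa>(2) \<kappa>(1)]) auto
  have "measure (\<mu> t) (ball x e) \<le> 2 * e * - Im (cauchy_G (\<mu> t) (Complex x e))"
    by (rule mu.measure_ball_le_Im_cauchy_G[OF \<open>0 < e\<close>])
  also have "\<dots> \<le> 2 * e * Im (recip_H (\<mu> T) (Complex x e))"
    using t \<open>0 < e\<close> \<open>1 \<le> cmod _\<close>
    by (intro mult_left_mono neg_Im_cauchy_G_le_Im_recip_H_later) auto
  also have "\<dots> \<le> 2 * e * (e / ((b - x)\<^sup>2 * (\<integral>y. (y - x) / ((y - x)\<^sup>2 + 1) \<partial>\<mu> T)\<^sup>2))"
    using mu_T.Im_recip_H_le_of_AE_greater[OF AE_T, of x e] \<open>1 \<le> b - x\<close> \<open>0 < e\<close> \<open>e < 1\<close>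
    by (intro mult_left_mono) auto
  also have "\<dots> = 2 / ((b - x)\<^sup>2 * (\<integral>y. (y - x) / ((y - x)\<^sup>2 + 1) \<partial>\<mu> T)\<^sup>2) * e\<^sup>2"
    by (simp add: power2_eq_square)
  finally show ?thesis .
qed

lemma AE_greater_uniform_of_bdd_below_msupp:
  assumes "0 \<le> T" "bdd_below (msupp (\<mu> T))"
  obtains b where "\<And>t. t \<in> {0..T} \<Longrightarrow> AE y in \<mu> t. b < y"
proof -
  interpret mu_T: real_distribution "\<mu> T"
    using assms(1) by (rule real_distribution_mu)
  obtain b where AE_T: "AE y in \<mu> T. b < y"
    using assms(2) mu_T.bdd_below_msupp_iff_AE by blast
  obtain \<kappa> where \<kappa>: "0 < \<kappa>" "\<And>s. s \<in> {0..T} \<Longrightarrow> \<kappa> \<le> (\<integral>y. 1 / (1 + y\<^sup>2) \<partial>\<mu> s)"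
    using uniform_lower_bound_integral_inverse_sq[OF assms(1)] by blast
  have "AE y in \<mu> t. b - 2 - 4 / \<kappa> < y" if t: "t \<in> {0..T}" for t
  proof -
    interpret mu: real_distribution "\<mu> t"
      using t by (intro real_distribution_mu) simp
    have "\<exists>C. \<forall>e. 0 < e \<longrightarrow> e < 1 \<longrightarrow> measure (\<mu> t) (ball x e) \<le> C * e\<^sup>2"
      if "x < b - 1 - 4 / \<kappa>" for x
      using measure_ball_le_of_AE_greater_later[OF t AE_T \<kappa> that] by blast
    moreover have "b - 2 - 4 / \<kappa> < b - 1 - 4 / \<kappa>"
      by simp
    ultimately show ?thesis
      by (rule mu.AE_greater_of_measure_ball_le)
  qed
  then show ?thesis
    using that by blast
qed

lemma uniform_lower_bound_cmod_cauchy_G: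
  assumes "0 < T" "\<And>t. t \<in> {0..T} \<Longrightarrow> AE y in \<mu> t. a < y" "x < a" "x < 0"
  obtains c \<delta> where "0 < c" "0 < \<delta>" "\<delta> \<le> T"
    "\<And>t e. 0 < t \<Longrightarrow> t < \<delta> \<Longrightarrow> 0 < e \<Longrightarrow> e \<le> 1 \<Longrightarrow> c \<le> cmod (cauchy_G (\<mu> t) (Complex x e))"
proof -
  \<comment> \<open>\<open>\<mu> 0\<close> is a point mass at \<open>0\<close> and \<open>g 0 > 0\<close>, so by weak continuity \<open>\<integral>g d\<mu>\<^sub>t\<close> stays away from \<open>0\<close>\<close>
  define g where "g y = (y - x) / ((y - x)\<^sup>2 + 1)" for y
  have g_cont: "continuous_on UNIV g"
    unfolding g_def by (intro continuous_intros) (auto simp: add_nonneg_pos)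
  have "bounded (range g)"
    using abs_divide_power2_add_one_le unfolding g_def bounded_iff by (intro exI[of _ 1]) auto
  with g_cont have "continuous_on {0..} (\<lambda>t. \<integral>y. g y \<partial>\<mu> t)"
    by (rule continuous_on_integral_mu)
  moreover have "(\<integral>y. g y \<partial>\<mu> 0) = g 0"
    using g_cont unfolding mu_0 by (intro integral_return) (auto intro: borel_measurable_continuous_onI)
  ultimately have "((\<lambda>t. \<integral>y. g y \<partial>\<mu> t) \<longlongrightarrow> g 0) (at 0 within {0..})"
    unfolding continuous_on_eq_continuous_within continuous_within by force
  moreover have "0 < g 0"
    using assms(4) by (simp add: g_def divide_neg_pos)
  ultimately have "\<forall>\<^sub>F t in at 0 within {0..}. g 0 / 2 < (\<integral>y. g y \<partial>\<mu> t)"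
    by (intro order_tendstoD) auto
  then obtain d where d: "0 < d" "\<And>t. 0 < t \<Longrightarrow> t < d \<Longrightarrow> g 0 / 2 < (\<integral>y. g y \<partial>\<mu> t)"
    unfolding eventually_at by (auto simp: dist_real_def)
  show ?thesis
  proof (rule that[of "g 0 / 2" "min d T"])
    fix t e :: real
    assume t: "0 < t" "t < min d T" and e: "0 < e" "e \<le> 1"
    interpret mu: real_distribution "\<mu> t"
      using t by (intro real_distribution_mu) simp
    have "AE y in \<mu> t. x < y"
      using assms(2)[of t] assms(3) t by (auto elim: AE_mp)
    then have "(\<integral>y. g y \<partial>\<mu> t) \<le> cmod (cauchy_G (\<mu> t) (Complex x e))"
      unfolding g_def by (rule mu.integral_divide_power2_add_one_le_cmod_cauchy_G[OF _ e])
    then show "g 0 / 2 \<le> cmod (cauchy_G (\<mu> t) (Complex x e))"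
      using d(2)[of t] t by simp
  qed (use d(1) assms(1) \<open>0 < g 0\<close> in auto)
qed

lemma Im_gen_A_le_of_displacement_le:
  assumes "Im z \<noteq> 0" "0 < \<delta>"
    and "\<And>t. 0 < t \<Longrightarrow> t < \<delta> \<Longrightarrow> Im (recip_H (\<mu> t) z) - Im z \<le> C * (Im (recip_H (\<mu> t) \<i>) - 1)"
  shows "Im (gen_A \<gamma> \<tau> z) \<le> C * Im (gen_A \<gamma> \<tau> \<i>)"
proof -
  have "\<forall>\<^sub>F t in at_right 0. (Im (recip_H (\<mu> t) z) - Im z) / t \<le> C * ((Im (recip_H (\<mu> t) \<i>) - Im \<i>) / t)"
    unfolding eventually_at_right_field
  proof (intro exI[of _ \<delta>] conjI allI impI)
    fix t :: real
    assume t: "0 < t" "t < \<delta>"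
    then have "(Im (recip_H (\<mu> t) z) - Im z) / t \<le> C * (Im (recip_H (\<mu> t) \<i>) - 1) / t"
      using assms(3) by (intro divide_right_mono) auto
    then show "(Im (recip_H (\<mu> t) z) - Im z) / t \<le> C * ((Im (recip_H (\<mu> t) \<i>) - Im \<i>) / t)"
      by simp
  qed (use assms(2) in simp)
  moreover have "((\<lambda>t. C * ((Im (recip_H (\<mu> t) \<i>) - Im \<i>) / t)) \<longlongrightarrow> C * Im (gen_A \<gamma> \<tau> \<i>)) (at_right 0)"
    by (intro tendsto_mult_left Im_recip_H_difference_quotient_tendsto) simp
  ultimately show ?thesis
    using Im_recip_H_difference_quotient_tendsto[OF assms(1)]
    by (intro tendsto_le[OF trivial_limit_at_right_real])
qed

lemma Im_gen_A_le_linear: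
  assumes "0 < T" "\<And>t. t \<in> {0..T} \<Longrightarrow> AE y in \<mu> t. a < y" "x \<le> -1" "x \<le> a - 1"
  obtains C where "\<And>e. 0 < e \<Longrightarrow> e \<le> 1 \<Longrightarrow> Im (gen_A \<gamma> \<tau> (Complex x e)) \<le> C * e"
proof -
  have "x < a" "x < 0"
    using assms(3,4) by linarith+
  obtain c \<delta> where c: "0 < c" and \<delta>: "0 < \<delta>" "\<delta> \<le> T"
    and G: "\<And>t e. 0 < t \<Longrightarrow> t < \<delta> \<Longrightarrow> 0 < e \<Longrightarrow> e \<le> 1 \<Longrightarrow> c \<le> cmod (cauchy_G (\<mu> t) (Complex x e))"
    using uniform_lower_bound_cmod_cauchy_G[OF assms(1,2) \<open>x < a\<close> \<open>x < 0\<close>] by blast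
  define K where "K = (2 + a\<^sup>2)\<^sup>2 / c\<^sup>2 * Im (gen_A \<gamma> \<tau> \<i>)"
  show ?thesis
  proof (rule that[of K])
    fix e :: real
    assume e: "0 < e" "e \<le> 1"
    have "Im (gen_A \<gamma> \<tau> (Complex x e)) \<le> e * (2 + a\<^sup>2)\<^sup>2 / c\<^sup>2 * Im (gen_A \<gamma> \<tau> \<i>)"
      using e \<delta>(1)
    proof (intro Im_gen_A_le_of_displacement_le)
      fix t assume t: "0 < t" "t < \<delta>"
      then have "Im (recip_H (\<mu> t) (Complex x e)) - e
          \<le> e * (2 + a\<^sup>2)\<^sup>2 / c\<^sup>2 * (Im (recip_H (\<mu> t) \<i>) - 1)"
        using assms(2)[of t] assms(3,4) \<delta> c G[OF t e] e
        by (intro real_distribution.Im_recip_H_minus_le_i real_distribution_mu) auto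
      then show "Im (recip_H (\<mu> t) (Complex x e)) - Im (Complex x e)
          \<le> e * (2 + a\<^sup>2)\<^sup>2 / c\<^sup>2 * (Im (recip_H (\<mu> t) \<i>) - 1)"
        by simp
    qed auto
    then show "Im (gen_A \<gamma> \<tau> (Complex x e)) \<le> K * e"
      by (simp add: K_def mult_ac)
  qed
qed

lemma bdd_below_msupp_tau_of_mu:
  assumes "0 < T" "bdd_below (msupp (\<mu> T))"
  shows "bdd_below (msupp \<tau>)"
proof -
  interpret tau: finite_borel_measure \<tau>
    by (rule finite_borel_measure_tau)
  obtain a where a: "\<And>t. t \<in> {0..T} \<Longrightarrow> AE y in \<mu> t. a < y"
    using AE_greater_uniform_of_bdd_below_msupp assms by (meson less_imp_le)
  define q where "q = min (-1) (a - 1)"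
  have "\<exists>C. \<forall>e. 0 < e \<longrightarrow> e < 1 \<longrightarrow> measure \<tau> (ball x e) \<le> C * e\<^sup>2" if "x < q" for x
  proof -
    have "x \<le> -1" "x \<le> a - 1"
      using \<open>x < q\<close> by (auto simp: q_def)
    then obtain C where C: "\<And>e. 0 < e \<Longrightarrow> e \<le> 1 \<Longrightarrow> Im (gen_A \<gamma> \<tau> (Complex x e)) \<le> C * e"
      using Im_gen_A_le_linear[OF assms(1) a] by blast
    have "measure \<tau> (ball x e) \<le> (2 * C) * e\<^sup>2" if "0 < e" "e < 1" for e
    proof -
      have "measure \<tau> (ball x e) \<le> 2 * e * Im (gen_A \<gamma> \<tau> (Complex x e))"
        by (rule tau.measure_ball_le_Im_gen_A[OF \<open>0 < e\<close>])
      also have "\<dots> \<le> 2 * e * (C * e)"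
        using C[of e] that by (intro mult_left_mono) auto
      also have "\<dots> = (2 * C) * e\<^sup>2"
        by (simp add: power2_eq_square)
      finally show ?thesis .
    qed
    then show ?thesis
      by blast
  qed
  moreover have "q - 1 < q"
    by simp
  ultimately have "AE y in \<tau>. q - 1 < y"
    by (rule tau.AE_greater_of_measure_ball_le)
  then show ?thesis
    unfolding tau.bdd_below_msupp_iff_AE by (rule exI)
qed

end

theorem theorem6p4:
  fixes \<mu> :: "real \<Rightarrow> real measure" and \<gamma> :: real and \<tau> :: "real measure"
  assumes "monotone_conv_semigroup \<mu>"
    and "associated_pair \<mu> \<gamma> \<tau>"
  shows "((\<exists>t0>0. bdd_below (msupp (\<mu> t0))) \<longleftrightarrow> (\<forall>t\<ge>0. bdd_below (msupp (\<mu> t))))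
       \<and> ((\<forall>t\<ge>0. bdd_below (msupp (\<mu> t))) \<longleftrightarrow> bdd_below (msupp \<tau>))"
proof -
  interpret monotone_semigroup_pair \<mu> \<gamma> \<tau>
    using assms by unfold_locales
  have "bdd_below (msupp \<tau>)" if "\<exists>t0>0. bdd_below (msupp (\<mu> t0))"
    using that by (elim exE conjE) (rule bdd_below_msupp_tau_of_mu)
  moreover have "\<forall>t\<ge>0. bdd_below (msupp (\<mu> t))" if "bdd_below (msupp \<tau>)"
    using that by (simp add: bdd_below_msupp_mu_of_tau)
  moreover have "\<exists>t0>0. bdd_below (msupp (\<mu> t0))" if "\<forall>t\<ge>0. bdd_below (msupp (\<mu> t))"
    using that by (intro exI[of _ 1]) simp
  ultimately show ?thesis
    by argo
qed

end
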